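(* Let $F$ be a field of characteristic two and let $(A,\sigma)$ be a totally decomposable central simple $F$-algebra with orthogonal involution. If $\alpha+\sum_{i=1}^m\sigma(x_i)x_i\in\mathrm{Alt}(A,\sigma)$ for some $\alpha\in F$ and $x_1,\dots,x_m\in A$, then $\alpha\in Q(\mathfrak{Pf}(A,\sigma))$.
   Context: Involutions are of the first kind. $(A,\sigma)$ is totally decomposable if $(A,\sigma)\simeq\bigotimes_{i=1}^n(Q_i,\sigma_i)$ with quaternion $F$-algebras with involution. $\mathrm{Alt}(A,\sigma)=\{\sigma(x)-x\mid x\in A\}$. The Pfister invariant $\mathfrak{Pf}(A,\sigma)$ is the bilinear Pfister form $\langle\!\langle\alpha_1,\dots,\alpha_n\rangle\!\rangle=\langle1,\alpha_1\rangle\otimes\cdots\otimes\langle1,\alpha_n\rangle$, where $\alpha_i\in F^\times$ represents $\mathrm{disc}\,\sigma_i\in F^\times/F^{\times2}$ (independent of the decomposition up to isometry). For a symmetric bilinear form $\mathfrak b$ on $V$, $Q(\mathfrak b)=\{\mathfrak b(v,v)\mid 0\ne v\in V\}\cup\{0\}$. *)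

theory Defs
  imports Main
begin

text \<open>The base field F is a type 'a of class field; the algebra A is a type 'b of class
  ring_1, made into an F-algebra by a ring homomorphism sc from F into the centre of A.\<close>

definition alg_scalars :: "('a::field \<Rightarrow> 'b::ring_1) \<Rightarrow> bool" where
  "alg_scalars sc \<longleftrightarrow> sc 1 = 1 \<and> (\<forall>c d. sc (c + d) = sc c + sc d)
     \<and> (\<forall>c d. sc (c * d) = sc c * sc d) \<and> (\<forall>c x. sc c * x = x * sc c)"

definition fspan :: "('a::field \<Rightarrow> 'b::ring_1) \<Rightarrow> 'b set \<Rightarrow> 'b set" where
  "fspan sc S = {(\<Sum>s\<in>T. sc (c s) * s) | T c. finite T \<and> T \<subseteq> S}"

definition two_sided_ideal :: "'b::ring_1 set \<Rightarrow> bool" where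
  "two_sided_ideal I \<longleftrightarrow> 0 \<in> I \<and> (\<forall>x\<in>I. \<forall>y\<in>I. x + y \<in> I)
     \<and> (\<forall>x\<in>I. \<forall>r. r * x \<in> I \<and> x * r \<in> I)"

definition central_simple :: "('a::field \<Rightarrow> 'b::ring_1) \<Rightarrow> bool" where
  "central_simple sc \<longleftrightarrow> alg_scalars sc
     \<and> (\<exists>S. finite S \<and> fspan sc S = UNIV)
     \<and> (\<forall>z. (\<forall>x. z * x = x * z) \<longrightarrow> z \<in> range sc)
     \<and> (\<forall>I::'b set. two_sided_ideal I \<longrightarrow> I = {0} \<or> I = UNIV)"

definition involution_first_kind :: "('a::field \<Rightarrow> 'b::ring_1) \<Rightarrow> ('b \<Rightarrow> 'b) \<Rightarrow> bool" where
  "involution_first_kind sc \<sigma> \<longleftrightarrow> (\<forall>x y. \<sigma> (x + y) = \<sigma> x + \<sigma> y)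
     \<and> (\<forall>x y. \<sigma> (x * y) = \<sigma> y * \<sigma> x) \<and> (\<forall>x. \<sigma> (\<sigma> x) = x) \<and> (\<forall>c. \<sigma> (sc c) = sc c)"

definition Alt :: "('b::ring_1 \<Rightarrow> 'b) \<Rightarrow> 'b set" where
  "Alt \<sigma> = range (\<lambda>x. \<sigma> x - x)"

definition Alt_on :: "('b::ring_1 \<Rightarrow> 'b) \<Rightarrow> 'b set \<Rightarrow> 'b set" where
  "Alt_on \<sigma> S = (\<lambda>x. \<sigma> x - x) ` S"

text \<open>In characteristic two an involution of the first kind on a central simple algebra
  is symplectic iff 1 lies in Symd(A,sigma) = Alt(A,sigma), and orthogonal otherwise.\<close>
definition orthogonal_char2 :: "('b::ring_1 \<Rightarrow> 'b) \<Rightarrow> bool" where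
  "orthogonal_char2 \<sigma> \<longleftrightarrow> 1 \<notin> Alt \<sigma>"

text \<open>Quaternion subalgebra [a,b) generated by u, v with u^2+u=a, v^2=b, vu=(u+1)v.\<close>
definition quat_basis :: "'b::ring_1 \<Rightarrow> 'b \<Rightarrow> nat \<Rightarrow> 'b" where
  "quat_basis u v k = (if k = 0 then 1 else if k = 1 then u else if k = 2 then v else u * v)"

definition quat_elt :: "('a::field \<Rightarrow> 'b::ring_1) \<Rightarrow> 'b \<Rightarrow> 'b \<Rightarrow> (nat \<Rightarrow> 'a) \<Rightarrow> 'b" where
  "quat_elt sc u v c = sc (c 0) + sc (c 1) * u + sc (c 2) * v + sc (c 3) * (u * v)"

definition quat_sub :: "('a::field \<Rightarrow> 'b::ring_1) \<Rightarrow> 'b \<Rightarrow> 'b \<Rightarrow> 'b set" where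
  "quat_sub sc u v = range (quat_elt sc u v)"

definition quat_nrd :: "'a::field \<Rightarrow> 'a \<Rightarrow> (nat \<Rightarrow> 'a) \<Rightarrow> 'a" where
  "quat_nrd a b c = c 0 ^ 2 + c 0 * c 1 + a * c 1 ^ 2 + b * (c 2 ^ 2 + c 2 * c 3 + a * c 3 ^ 2)"

text \<open>(A,sigma) is isomorphic to the tensor product of the quaternion algebras with
  involution (Q_i, sigma|Q_i), i < n, realised internally: Q_i = [a_i,b_i) generated by
  u_i, v_i; the Q_i pairwise commute, are sigma-stable, and the products of basis elements
  form an F-basis of A (i.e. the multiplication map from the tensor product is bijective).\<close>
definition tensor_index :: "nat \<Rightarrow> (nat \<Rightarrow> nat) set" where
  "tensor_index n = {f. (\<forall>i<n. f i < 4) \<and> (\<forall>i\<ge>n. f i = 0)}"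

definition tensor_basis :: "nat \<Rightarrow> (nat \<Rightarrow> 'b::ring_1) \<Rightarrow> (nat \<Rightarrow> 'b) \<Rightarrow> (nat \<Rightarrow> nat) \<Rightarrow> 'b" where
  "tensor_basis n u v f = prod_list (map (\<lambda>i. quat_basis (u i) (v i) (f i)) [0..<n])"

definition tensor_decomp :: "('a::field \<Rightarrow> 'b::ring_1) \<Rightarrow> ('b \<Rightarrow> 'b) \<Rightarrow> nat
     \<Rightarrow> (nat \<Rightarrow> 'a) \<Rightarrow> (nat \<Rightarrow> 'a) \<Rightarrow> (nat \<Rightarrow> 'b) \<Rightarrow> (nat \<Rightarrow> 'b) \<Rightarrow> bool" where
  "tensor_decomp sc \<sigma> n a b u v \<longleftrightarrow>
     (\<forall>i<n. u i * u i + u i = sc (a i) \<and> v i * v i = sc (b i) \<and> b i \<noteq> 0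
            \<and> v i * u i = (u i + 1) * v i)
   \<and> (\<forall>i<n. \<forall>j<n. i \<noteq> j \<longrightarrow> u i * u j = u j * u i \<and> u i * v j = v j * u i \<and> v i * v j = v j * v i)
   \<and> (\<forall>i<n. \<sigma> (u i) \<in> quat_sub sc (u i) (v i) \<and> \<sigma> (v i) \<in> quat_sub sc (u i) (v i))
   \<and> (\<forall>x. \<exists>c. x = (\<Sum>f\<in>tensor_index n. sc (c f) * tensor_basis n u v f))
   \<and> (\<forall>c. (\<Sum>f\<in>tensor_index n. sc (c f) * tensor_basis n u v f) = 0
          \<longrightarrow> (\<forall>f\<in>tensor_index n. c f = 0))"

text \<open>d in F^x represents disc(sigma|Q) : the class of Nrd(w) mod squares for an invertible
  w in Alt(Q, sigma|Q) (characteristic two, so the sign is irrelevant).\<close>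
definition disc_rep :: "('a::field \<Rightarrow> 'b::ring_1) \<Rightarrow> ('b \<Rightarrow> 'b) \<Rightarrow> 'a \<Rightarrow> 'a \<Rightarrow> 'b \<Rightarrow> 'b \<Rightarrow> 'a \<Rightarrow> bool" where
  "disc_rep sc \<sigma> a b u v d \<longleftrightarrow> d \<noteq> 0 \<and>
     (\<exists>c l. l \<noteq> 0 \<and> quat_elt sc u v c \<in> Alt_on \<sigma> (quat_sub sc u v)
        \<and> (\<exists>y\<in>quat_sub sc u v. quat_elt sc u v c * y = 1 \<and> y * quat_elt sc u v c = 1)
        \<and> d = l ^ 2 * quat_nrd a b c)"

text \<open>The bilinear Pfister form <<alpha_0,...,alpha_{n-1}>>, diagonal with respect to the
  basis indexed by subsets S of {..<n}, with entries prod_{i in S} alpha_i, and its set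
  of represented values Q(b) = {b(v,v) | v \<noteq> 0} \<union> {0}.\<close>
definition pf_bilin :: "(nat \<Rightarrow> 'a::field) \<Rightarrow> nat \<Rightarrow> (nat set \<Rightarrow> 'a) \<Rightarrow> (nat set \<Rightarrow> 'a) \<Rightarrow> 'a" where
  "pf_bilin alph n x y = (\<Sum>S\<in>Pow {..<n}. (\<Prod>i\<in>S. alph i) * x S * y S)"

definition pf_values :: "(nat \<Rightarrow> 'a::field) \<Rightarrow> nat \<Rightarrow> 'a set" where
  "pf_values alph n = {pf_bilin alph n x x | x. \<exists>S\<in>Pow {..<n}. x S \<noteq> 0} \<union> {0}"

end

theory Submission
  imports Defs "HOL.Vector_Spaces"
begin

text \<open>
  For every quaternion factor Q = [a,b) of the decomposition we build a linear functional \<ell> on Q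
  with \<ell>(1) = 1 and \<ell> \<circ> \<sigma> = \<ell>, such that \<ell>(\<sigma>(e) e) is a value of <1, \<alpha>> for each
  standard basis element e of Q, where \<alpha> represents disc(\<sigma>|Q). Since Alt(Q) is the line spanned
  by a pure representative w of the discriminant, \<ell> can be taken to be a trace form
  y \<mapsto> Trd(z y) with Trd(z) = 1 and Trd(z w) = 0.

  The tensor product \<Phi> of these functionals is a linear functional on A with \<Phi>(1) = 1. It
  vanishes on Alt(A, \<sigma>), since \<sigma> preserves each factor and each \<ell> is \<sigma>-invariant. Modulo
  Alt(A, \<sigma>), \<sigma>(y) y is \<Sum> d_f^2 \<sigma>(e_f) e_f over the tensor basis e_f, and \<Phi>(\<sigma>(e_f) e_f) is
  a product of values of the forms <1, \<alpha>_i>, hence a value of <<\<alpha>_1, ..., \<alpha>_n>>. In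
  characteristic two the values of a bilinear form are closed under addition, so
  \<Phi>(\<sigma>(y) y) \<in> Q(Pf(A, \<sigma>)). Applying \<Phi> to \<alpha> + \<Sum> \<sigma>(x_i) x_i \<in> Alt(A, \<sigma>) gives
  \<alpha> = \<Sum> \<Phi>(\<sigma>(x_i) x_i).
\<close>

lemma numeral_char2:
  assumes "(1::'a::comm_ring_1) + 1 = 0"
  shows "(numeral (num.Bit0 k) :: 'a) = 0" "(numeral (num.Bit1 k) :: 'a) = 1"
proof -
  have "(numeral (num.Bit0 k) :: 'a) = numeral k * (1 + 1)"
    by (metis mult_2_right numeral_Bit0 one_add_one)
  then show "(numeral (num.Bit0 k) :: 'a) = 0" using assms by (simp only: mult_zero_right)
  then show "(numeral (num.Bit1 k) :: 'a) = 1" by (metis numeral_Bit0 numeral_Bit1 add_0)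
qed

lemma sum_lessThan_4: "(\<Sum>k<4. f k) = f 0 + f 1 + f 2 + f (3::nat)"
  by (simp add: numeral_eq_Suc lessThan_Suc add_ac)

lemma less_4_cases: "(k::nat) < 4 \<Longrightarrow> k = 0 \<or> k = 1 \<or> k = 2 \<or> k = 3"
  by auto

definition vec4 :: "'a \<Rightarrow> 'a \<Rightarrow> 'a \<Rightarrow> 'a \<Rightarrow> nat \<Rightarrow> 'a" where
  "vec4 x0 x1 x2 x3 = (\<lambda>k. if k = 0 then x0 else if k = 1 then x1 else if k = 2 then x2 else x3)"

lemma vec4_simps [simp]:
  "vec4 x0 x1 x2 x3 0 = x0" "vec4 x0 x1 x2 x3 1 = x1" "vec4 x0 x1 x2 x3 (Suc 0) = x1"
  "vec4 x0 x1 x2 x3 2 = x2" "vec4 x0 x1 x2 x3 3 = x3"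
  by (simp_all add: vec4_def)

definition unit_vec :: "nat \<Rightarrow> nat \<Rightarrow> 'a::{zero,one}" where
  "unit_vec i = (\<lambda>j. if j = i then 1 else 0)"

lemma sum_unit_vec: "j < 4 \<Longrightarrow> (\<Sum>k<4. unit_vec j k * L k) = (L j :: 'a::semiring_1)"
  using less_4_cases[of j] by (auto simp: sum_lessThan_4 unit_vec_def)

text \<open>Coordinates of a product in the quaternion algebra [a,b), in the basis 1, u, v, uv
  with u^2 + u = a, v^2 = b, vu = (u + 1)v. In characteristic two, coordinate 1
  (that of u) is the reduced trace.\<close>
definition quat_mult_coords :: "'a::field \<Rightarrow> 'a \<Rightarrow> (nat \<Rightarrow> 'a) \<Rightarrow> (nat \<Rightarrow> 'a) \<Rightarrow> nat \<Rightarrow> 'a" where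
  "quat_mult_coords a b c d = vec4
     (c 0 * d 0 + a * c 1 * d 1 + b * c 2 * d 2 + b * c 2 * d 3 + a * b * c 3 * d 3)
     (c 0 * d 1 + c 1 * d 0 + c 1 * d 1 + b * c 2 * d 3 + b * c 3 * d 2)
     (c 0 * d 2 + c 2 * d 0 + a * c 1 * d 3 + c 2 * d 1 + a * c 3 * d 1)
     (c 0 * d 3 + c 3 * d 0 + c 1 * d 2 + c 1 * d 3 + c 2 * d 1)"

lemma quat_mult_coords_bilinear:
  "k < 4 \<Longrightarrow> (\<Sum>i<4. \<Sum>j<4. c i * d j * quat_mult_coords a b (unit_vec i) (unit_vec j) k)
     = quat_mult_coords a b c d k"
  using less_4_cases[of k]
  by (auto simp: sum_lessThan_4 quat_mult_coords_def unit_vec_def algebra_simps)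

lemma quat_mult_coords_cong:
  "(\<And>j. j < 4 \<Longrightarrow> c j = c' j) \<Longrightarrow> (\<And>j. j < 4 \<Longrightarrow> d j = d' j)
     \<Longrightarrow> quat_mult_coords a b c d = quat_mult_coords a b c' d'"
  by (simp add: quat_mult_coords_def)

lemma quat_mult_coords_smult_left:
  "quat_mult_coords a b (\<lambda>j. t * c j) d = (\<lambda>k. t * quat_mult_coords a b c d k)"
  by (rule ext) (simp add: quat_mult_coords_def vec4_def algebra_simps)

lemma quat_trace_linear:
  "(\<Sum>k<4. c k * quat_mult_coords a b z (unit_vec k) 1) = quat_mult_coords a b z c 1"
  by (simp add: sum_lessThan_4 quat_mult_coords_def unit_vec_def algebra_simps)

lemma quat_trace_add_smult:
  "quat_mult_coords a b z (\<lambda>j. c j + t * e j) 1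
     = quat_mult_coords a b z c 1 + t * quat_mult_coords a b z e 1"
  by (simp add: quat_mult_coords_def algebra_simps)

lemma quat_trace_smult: "quat_mult_coords a b z (\<lambda>j. t * f j) 1 = t * quat_mult_coords a b z f 1"
  by (simp add: quat_mult_coords_def algebra_simps)

text \<open>Every pure element w = w_0 + w_2 v + w_3 uv with (w_2, w_3) \<noteq> 0 has w_0 of the form
  b(x w_3 + y w_2); for such w, the element z below has Trd(z) = 1 and Trd(z w) = 0.\<close>
definition pure_coords :: "'a::field \<Rightarrow> 'a \<Rightarrow> 'a \<Rightarrow> 'a \<Rightarrow> 'a \<Rightarrow> nat \<Rightarrow> 'a" where
  "pure_coords b x y w2 w3 = vec4 (b * (x * w3 + y * w2)) 0 w2 w3"

definition trace_witness :: "'a::field \<Rightarrow> 'a \<Rightarrow> 'a \<Rightarrow> 'a \<Rightarrow> nat \<Rightarrow> 'a" where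
  "trace_witness a b x y = vec4 (a + b * (x^2 + x * y + a * y^2) + 1) 1 x y"

context
  fixes a b :: "'a::field"
  assumes char2: "(1::'a) + 1 = 0"
begin

lemma quat_square_coords:
  "k < 4 \<Longrightarrow> quat_mult_coords a b c c k = c 1 * c k + quat_nrd a b c * unit_vec 0 k"
  using less_4_cases[of k]
  by (auto simp: quat_mult_coords_def unit_vec_def quat_nrd_def algebra_simps power2_eq_square
      numeral_char2[OF char2])

lemma quat_anticommutator_coords:
  "w 1 = 0 \<Longrightarrow> k < 4 \<Longrightarrow> quat_mult_coords a b w c k + quat_mult_coords a b c w k
     = c 1 * w k + quat_mult_coords a b c w 1 * unit_vec 0 k"
  using less_4_cases[of k]
  by (auto simp: quat_mult_coords_def unit_vec_def algebra_simps numeral_char2[OF char2])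

lemma trace_witness_pure:
  "quat_mult_coords a b (trace_witness a b x y) (pure_coords b x y w2 w3) 1 = 0"
  by (simp add: quat_mult_coords_def trace_witness_def pure_coords_def algebra_simps
      power2_eq_square numeral_char2[OF char2])

text \<open>Up to the factor N = Nrd(w), the left-hand side is Trd(z \<sigma>(y) y), since
  \<sigma>(y) = y + (Trd(y w) / N) w; the right-hand side is a value of <N, 1>.\<close>
lemma trace_witness_norm:
  fixes x y w2 w3 :: 'a and c :: "nat \<Rightarrow> 'a"
  defines "W \<equiv> pure_coords b x y w2 w3"
  shows "quat_mult_coords a b (trace_witness a b x y)
     (quat_mult_coords a b (\<lambda>j. quat_nrd a b W * c j + quat_mult_coords a b c W 1 * W j) c) 1
   = quat_nrd a b W * (quat_mult_coords a b (vec4 1 1 x y) c 1)^2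
     + (quat_mult_coords a b (vec4 1 1 x y) (quat_mult_coords a b W c) 1)^2"
  unfolding W_def quat_mult_coords_def quat_nrd_def trace_witness_def pure_coords_def vec4_simps
  by (simp add: algebra_simps power2_eq_square numeral_char2[OF char2])

end

text \<open>L k is the value of a linear functional \<ell> on [a,b) at the k-th basis element.\<close>
definition disc_functional ::
  "('a::field \<Rightarrow> 'b::ring_1) \<Rightarrow> ('b \<Rightarrow> 'b) \<Rightarrow> 'b \<Rightarrow> 'b \<Rightarrow> 'a \<Rightarrow> (nat \<Rightarrow> 'a) \<Rightarrow> bool" where
  "disc_functional sc \<sigma> u v d L \<longleftrightarrow> L 0 = 1
     \<and> (\<forall>c c'. \<sigma> (quat_elt sc u v c) = quat_elt sc u v c'
          \<longrightarrow> (\<Sum>k<4. c' k * L k) = (\<Sum>k<4. c k * L k))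
     \<and> (\<forall>k<4. \<forall>c'. \<sigma> (quat_basis u v k) * quat_basis u v k = quat_elt sc u v c'
          \<longrightarrow> (\<exists>s t. (\<Sum>j<4. c' j * L j) = s^2 + d * t^2))"

locale char2_involution =
  fixes sc :: "'a::field \<Rightarrow> 'b::ring_1" and \<sigma> :: "'b \<Rightarrow> 'b"
  assumes scalars: "alg_scalars sc" and involution: "involution_first_kind sc \<sigma>"
    and char2: "(1::'a) + 1 = 0" and one_notin_Alt: "1 \<notin> Alt \<sigma>"
begin

lemma sc_one [simp]: "sc 1 = 1"
  and sc_add [simp]: "sc (c + d) = sc c + sc d"
  and sc_mult [simp]: "sc (c * d) = sc c * sc d"
  and sc_commute: "sc c * x = x * sc c"
  using scalars unfolding alg_scalars_def by blast+

lemma sc_zero [simp]: "sc 0 = 0"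
  using sc_add[of 0 0] by simp

lemma sc_minus [simp]: "sc (- c) = - sc c"
  using sc_add[of c "-c"] by (simp add: eq_neg_iff_add_eq_0 add.commute)

lemma sc_diff [simp]: "sc (c - d) = sc c - sc d"
  using sc_add[of c "-d"] by simp

lemma mult_sc_left_commute: "x * (sc d * y) = sc d * (x * y)"
  by (simp only: mult.assoc[symmetric] sc_commute[of d x, symmetric])

lemma sc_mult_assoc: "sc c * (sc d * y) = sc (c * d) * y"
  by (simp add: mult.assoc)

lemma sc_mult_sc_mult: "sc c * x * (sc d * y) = sc (c * d) * (x * y)"
  by (simp only: mult.assoc mult_sc_left_commute[of x d y] sc_mult)

lemma add_self [simp]: "(x::'b) + x = 0"
proof -
  have "x + x = sc (1 + 1) * x" by (simp only: sc_add sc_one distrib_right mult_1_left)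
  then show ?thesis using char2 by simp
qed

lemma add_self_left: "(x::'b) + (x + y) = y"
  by (simp add: add.assoc[symmetric])

lemma diff_eq_add: "(x::'b) - y = x + y"
  using add_self[of y] by (simp add: minus_unique)

lemma scalar_add_self [simp]: "(x::'a) + x = 0"
proof -
  have "x + x = (1 + 1) * x" by (simp add: distrib_right)
  then show ?thesis using char2 by simp
qed

lemma one_neq_zero: "(1::'b) \<noteq> 0"
proof
  assume "(1::'b) = 0"
  then have "1 = \<sigma> 0 - 0" by simp
  then show False using one_notin_Alt unfolding Alt_def by blast
qed

lemma sc_inj: "sc c = sc d \<Longrightarrow> c = d"
proof (rule ccontr)
  assume "sc c = sc d" "c \<noteq> d"
  then have "sc (c - d) = 0" by simp
  then have "sc ((c - d) * inverse (c - d)) = 0" by (simp only: sc_mult) simp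
  then show False using \<open>c \<noteq> d\<close> one_neq_zero by simp
qed

lemma sc_mult_eq_scD:
  assumes "t \<noteq> 0" "sc t * y = sc s"
  shows "y = sc (s / t)"
proof -
  have "y = sc (inverse t) * (sc t * y)" using assms(1) by (simp add: sc_mult_assoc)
  also have "\<dots> = sc (inverse t * s)" using assms(2) by simp
  finally show ?thesis by (simp add: divide_inverse mult.commute)
qed

lemma invol_add [simp]: "\<sigma> (x + y) = \<sigma> x + \<sigma> y"
  and invol_mult [simp]: "\<sigma> (x * y) = \<sigma> y * \<sigma> x"
  and invol_invol [simp]: "\<sigma> (\<sigma> x) = x"
  and invol_sc [simp]: "\<sigma> (sc c) = sc c"
  using involution unfolding involution_first_kind_def by blast+

lemma invol_zero [simp]: "\<sigma> 0 = 0"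
  using invol_sc[of 0] by simp

lemma invol_one [simp]: "\<sigma> 1 = 1"
  using invol_sc[of 1] by simp

lemma invol_smult: "\<sigma> (sc c * x) = sc c * \<sigma> x"
  by (simp add: sc_commute[of c "\<sigma> x"])

lemma invol_sum: "\<sigma> (sum f A) = (\<Sum>x\<in>A. \<sigma> (f x))"
  by (induction A rule: infinite_finite_induct) auto

lemma Alt_iff: "y \<in> Alt \<sigma> \<longleftrightarrow> (\<exists>x. y = \<sigma> x + x)"
  by (auto simp: Alt_def diff_eq_add)

lemma Alt_add: "y \<in> Alt \<sigma> \<Longrightarrow> y' \<in> Alt \<sigma> \<Longrightarrow> y + y' \<in> Alt \<sigma>"
proof -
  assume "y \<in> Alt \<sigma>" "y' \<in> Alt \<sigma>"
  then obtain x x' where "y = \<sigma> x + x" "y' = \<sigma> x' + x'" by (auto simp: Alt_iff)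
  then have "y + y' = \<sigma> (x + x') + (x + x')" by (simp add: add_ac)
  then show ?thesis unfolding Alt_iff by blast
qed

lemma Alt_smult: "y \<in> Alt \<sigma> \<Longrightarrow> sc c * y \<in> Alt \<sigma>"
proof -
  assume "y \<in> Alt \<sigma>"
  then obtain x where "y = \<sigma> x + x" by (auto simp: Alt_iff)
  then have "sc c * y = \<sigma> (sc c * x) + sc c * x" by (simp only: distrib_left invol_smult)
  then show ?thesis unfolding Alt_iff by blast
qed

lemma Alt_fixed: "y \<in> Alt \<sigma> \<Longrightarrow> \<sigma> y = y"
  unfolding Alt_iff by (auto simp: add.commute)

lemma sc_in_Alt_eq_0: "sc c \<in> Alt \<sigma> \<Longrightarrow> c = 0"
proof (rule ccontr)
  assume "sc c \<in> Alt \<sigma>" "c \<noteq> 0"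
  from \<open>sc c \<in> Alt \<sigma>\<close> have "sc (inverse c) * sc c \<in> Alt \<sigma>" by (rule Alt_smult)
  then have "1 \<in> Alt \<sigma>" using \<open>c \<noteq> 0\<close> by (simp flip: sc_mult)
  then show False using one_notin_Alt by simp
qed

sublocale vs: vector_space "\<lambda>c x. sc c * x"
  by unfold_locales (simp_all add: distrib_left distrib_right sc_mult_assoc)

lemma span_fixed:
  assumes "s \<in> vs.span S" "\<forall>t\<in>S. \<sigma> t = t"
  shows "\<sigma> s = s"
proof -
  from assms(1) obtain T r where s: "s = (\<Sum>t\<in>T. sc (r t) * t)" and T: "T \<subseteq> S"
    unfolding vs.span_explicit by blast
  have "\<sigma> s = (\<Sum>t\<in>T. sc (r t) * \<sigma> t)" unfolding s by (simp only: invol_sum invol_smult)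
  also have "\<dots> = s" unfolding s using T assms(2) by (intro sum.cong) auto
  finally show ?thesis .
qed

lemma quat_elt_sum: "quat_elt sc u v c = (\<Sum>k<4. sc (c k) * quat_basis u v k)"
  by (simp add: sum_lessThan_4 quat_elt_def quat_basis_def)

lemma quat_elt_unit_vec: "k < 4 \<Longrightarrow> quat_elt sc u v (unit_vec k) = quat_basis u v k"
  using less_4_cases[of k] by (auto simp: quat_elt_def unit_vec_def quat_basis_def)

end

locale quaternion = char2_involution sc \<sigma> for sc :: "'a::field \<Rightarrow> 'b::ring_1" and \<sigma> +
  fixes u v :: 'b and a b :: 'a
  assumes u_square: "u * u + u = sc a" and v_square: "v * v = sc b" and v_u: "v * u = (u + 1) * v"
    and coords_unique: "\<And>c. quat_elt sc u v c = 0 \<Longrightarrow> c 0 = 0 \<and> c 1 = 0 \<and> c 2 = 0 \<and> c 3 = 0"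
    and invol_u: "\<sigma> u \<in> quat_sub sc u v" and invol_v: "\<sigma> v \<in> quat_sub sc u v"
begin

abbreviation qe where "qe \<equiv> quat_elt sc u v"

lemma qe_cong: "(\<And>k. k < 4 \<Longrightarrow> c k = d k) \<Longrightarrow> qe c = qe d"
  unfolding quat_elt_def by simp

lemma qe_add: "qe c + qe d = qe (\<lambda>k. c k + d k)"
  by (simp add: quat_elt_def distrib_right add_ac)

lemma qe_smult: "sc t * qe c = qe (\<lambda>k. t * c k)"
  by (simp add: quat_elt_def distrib_left sc_mult_assoc)

lemma qe_sum: "finite I \<Longrightarrow> (\<Sum>i\<in>I. qe (f i)) = qe (\<lambda>k. \<Sum>i\<in>I. f i k)"
  by (induction I rule: finite_induct) (simp_all add: qe_add quat_elt_def[of sc u v "\<lambda>_. 0"])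

lemma qe_sc: "qe (vec4 t 0 0 0) = sc t"
  by (simp add: quat_elt_def)

lemma qe_eq_iff: "qe c = qe d \<longleftrightarrow> (\<forall>k<4. c k = d k)"
proof
  assume "qe c = qe d"
  then have "qe (\<lambda>k. c k - d k) = 0" by (simp add: quat_elt_def algebra_simps)
  from coords_unique[OF this] show "\<forall>k<4. c k = d k"
    by (auto simp: less_Suc_eq numeral_eq_Suc)
qed (auto intro: qe_cong)

lemma qe_eq_sc_imp_trace_0: "qe c = sc t \<Longrightarrow> c 1 = 0"
  using qe_eq_iff[of c "vec4 t 0 0 0"] by (simp add: qe_sc)

lemma basis_relations:
  "u * u = sc a + u" "v * u = u * v + v" "u * (u * v) = sc a * v + u * v" "u * v * u = sc a * v"
  "v * (u * v) = sc b + sc b * u" "u * v * v = sc b * u" "u * v * (u * v) = sc a * sc b"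
proof -
  show uu: "u * u = sc a + u" using u_square by (metis add_self_left add.commute add.left_commute)
  show vu: "v * u = u * v + v" using v_u by (simp add: distrib_right)
  show uuv: "u * (u * v) = sc a * v + u * v" by (simp add: mult.assoc[symmetric] uu distrib_right)
  show uvu: "u * v * u = sc a * v"
    by (simp add: mult.assoc vu distrib_left uuv add.assoc)
  show "v * (u * v) = sc b + sc b * u"
    by (simp add: mult.assoc[symmetric] vu distrib_right mult.assoc v_square sc_commute add.commute)
  show "u * v * v = sc b * u" by (simp add: mult.assoc v_square sc_commute[of b u])
  show "u * v * (u * v) = sc a * sc b"
    by (simp add: mult.assoc[symmetric] uvu) (simp add: mult.assoc v_square)
qed

lemma basis_mult:
  "i < 4 \<Longrightarrow> j < 4 \<Longrightarrow> quat_basis u v i * quat_basis u v j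
     = qe (quat_mult_coords a b (unit_vec i) (unit_vec j))"
  using less_4_cases[of i] less_4_cases[of j]
  by (auto simp: quat_basis_def quat_mult_coords_def unit_vec_def quat_elt_def basis_relations
      v_square)

lemma qe_mult: "qe c * qe d = qe (quat_mult_coords a b c d)"
proof -
  have "qe c * qe d = (\<Sum>i<4. sc (c i) * quat_basis u v i * qe d)"
    by (simp only: quat_elt_sum[of u v c] sum_distrib_right)
  also have "\<dots> = (\<Sum>i<4. \<Sum>j<4. sc (c i) * quat_basis u v i * (sc (d j) * quat_basis u v j))"
    by (simp only: quat_elt_sum[of u v d] sum_distrib_left)
  also have "\<dots> = (\<Sum>i<4. \<Sum>j<4.
      qe (\<lambda>k. c i * d j * quat_mult_coords a b (unit_vec i) (unit_vec j) k))"
    by (intro sum.cong refl) (simp only: sc_mult_sc_mult basis_mult lessThan_iff qe_smult)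
  also have "\<dots> = qe (quat_mult_coords a b c d)"
    by (simp add: qe_sum quat_mult_coords_bilinear cong: qe_cong)
  finally show ?thesis .
qed

lemma invol_qe: "\<exists>c'. \<sigma> (qe c) = qe c'"
proof -
  obtain p r where p: "\<sigma> u = qe p" and r: "\<sigma> v = qe r"
    using invol_u invol_v by (auto simp: quat_sub_def)
  have "\<sigma> (qe c) = sc (c 0) + sc (c 1) * qe p + sc (c 2) * qe r + sc (c 3) * (qe r * qe p)"
    by (simp only: quat_elt_def[of sc u v c] invol_add invol_smult invol_mult[of u v] p r invol_sc)
  then show ?thesis
    by (simp add: qe_mult qe_smult qe_add flip: qe_sc) blast
qed

lemma qe_square: "qe c * qe c = sc (c 1) * qe c + sc (quat_nrd a b c)"
proof -
  have "qe c * qe c = qe (\<lambda>k. c 1 * c k + quat_nrd a b c * unit_vec 0 k)"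
    by (simp only: qe_mult) (rule qe_cong, simp add: quat_square_coords char2)
  also have "\<dots> = sc (c 1) * qe c + sc (quat_nrd a b c) * qe (unit_vec 0)"
    by (simp only: qe_add[symmetric] qe_smult)
  also have "\<dots> = sc (c 1) * qe c + sc (quat_nrd a b c)"
    by (simp add: quat_elt_unit_vec quat_basis_def)
  finally show ?thesis .
qed

text \<open>\<sigma> preserves the reduced trace: comparing \<sigma>(y^2) with \<sigma>(y)^2 shows that otherwise \<sigma>(y),
  and hence y, would be scalar.\<close>
lemma trace_invol_qe:
  assumes invol_c: "\<sigma> (qe c) = qe c'"
  shows "c' 1 = c 1"
proof (rule ccontr)
  assume ne: "c' 1 \<noteq> c 1"
  have "sc (c 1) * qe c' + sc (quat_nrd a b c) = sc (c' 1) * qe c' + sc (quat_nrd a b c')"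
    using arg_cong[where f=\<sigma>, OF qe_square[of c]] qe_square[of c']
    by (simp only: invol_add invol_mult[of "qe c" "qe c"] invol_smult invol_sc invol_c)
  then have "sc (c 1 - c' 1) * qe c' = sc (quat_nrd a b c' - quat_nrd a b c)"
    by (simp add: algebra_simps)
  then have scalar: "qe c' = sc ((quat_nrd a b c' - quat_nrd a b c) / (c 1 - c' 1))"
    using ne by (intro sc_mult_eq_scD) auto
  then have "qe c = sc ((quat_nrd a b c' - quat_nrd a b c) / (c 1 - c' 1))"
    using arg_cong[where f=\<sigma>, OF invol_c] by simp
  then show False using ne scalar qe_eq_sc_imp_trace_0 by metis
qed

lemma qe_in_span: "qe c \<in> vs.span {1, u, v, u * v}"
  unfolding quat_elt_def
  by (intro vs.span_add vs.span_scale[where x=1, simplified] vs.span_scale vs.span_base) auto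

lemma independent_card_le_4: "vs.independent S \<Longrightarrow> S \<subseteq> range qe \<Longrightarrow> card S \<le> 4"
proof -
  assume "vs.independent S" "S \<subseteq> range qe"
  then have "card S \<le> card {1, u, v, u * v}"
    using vs.independent_span_bound[of "{1, u, v, u * v}" S] qe_in_span by blast
  also have "\<dots> \<le> 4" by (simp add: card_insert_if)
  finally show ?thesis .
qed

lemma Alt_quat_independent:
  assumes w: "w = \<sigma> z + z" "w \<notin> range sc" and off_line: "\<And>k. \<sigma> x + x \<noteq> sc k * w"
  shows "vs.independent {x, z, \<sigma> x + x, w, 1}" "card {x, z, \<sigma> x + x, w, 1} = 5"
proof -
  define y where "y = \<sigma> x + x"
  have y_Alt: "y \<in> Alt \<sigma>" and w_Alt: "w \<in> Alt \<sigma>" unfolding y_def w Alt_iff by blast+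
  then have invol_y: "\<sigma> y = y" and invol_w: "\<sigma> w = w" by (simp_all add: Alt_fixed)
  have "w \<noteq> 0" using w(2) sc_zero by (metis rangeI)
  have 1: "1 \<notin> vs.span {}" using one_neq_zero by simp
  have 2: "w \<notin> vs.span {1}"
  proof
    assume "w \<in> vs.span {1}"
    then obtain k where "w - sc k * 1 \<in> vs.span {}" using vs.span_breakdown_eq by blast
    then show False using w(2) by auto
  qed
  have 3: "y \<notin> vs.span {w, 1}"
  proof
    assume "y \<in> vs.span {w, 1}"
    then obtain k d where "y - sc k * w - sc d * 1 \<in> vs.span {}"
      using vs.span_breakdown_eq by blast
    then have e: "y - sc k * w = sc d" by simp
    have "y - sc k * w \<in> Alt \<sigma>" unfolding diff_eq_add by (intro Alt_add y_Alt Alt_smult w_Alt)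
    then have "d = 0" using e sc_in_Alt_eq_0 by simp
    then show False using e off_line by (simp add: y_def)
  qed
  have 4: "z \<notin> vs.span {y, w, 1}"
  proof
    assume "z \<in> vs.span {y, w, 1}"
    then have "\<sigma> z = z" by (rule span_fixed) (simp add: invol_y invol_w)
    then show False using w(1) \<open>w \<noteq> 0\<close> by simp
  qed
  have 5: "x \<notin> vs.span {z, y, w, 1}"
  proof
    assume "x \<in> vs.span {z, y, w, 1}"
    then obtain k where s: "x - sc k * z \<in> vs.span {y, w, 1}" using vs.span_breakdown_eq by blast
    define s where "s = x - sc k * z"
    have invol_s: "\<sigma> s = s" unfolding s_def by (rule span_fixed[OF s]) (simp add: invol_y invol_w)
    have x_eq: "x = s + sc k * z" unfolding s_def diff_eq_add by (simp add: add.assoc)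
    have "\<sigma> x = s + sc k * \<sigma> z" using invol_s by (simp only: x_eq invol_add invol_smult)
    then have "y = sc k * (\<sigma> z + z)" unfolding y_def
      by (subst x_eq) (simp add: distrib_left add_ac add_self_left)
    then show False using off_line[of k] w(1) by (simp add: y_def)
  qed
  show "vs.independent {x, z, \<sigma> x + x, w, 1}"
    unfolding y_def[symmetric] by (intro vs.independent_insertI 1 2 3 4 5 vs.independent_empty)
  have "x \<notin> {z, y, w, 1}" "z \<notin> {y, w, 1}" "y \<notin> {w, 1}" "w \<notin> {1}"
    using 2 vs.span_superset[of "{1}"] 3 vs.span_superset[of "{w, 1}"]
      4 vs.span_superset[of "{y, w, 1}"] 5 vs.span_superset[of "{z, y, w, 1}"] by blast+
  then show "card {x, z, \<sigma> x + x, w, 1} = 5" unfolding y_def[symmetric] by simp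
qed

text \<open>Alt(Q) is a line: otherwise x, z, \<sigma>(x) + x, w, 1 would be five independent elements
  of the 4-dimensional Q.\<close>
lemma Alt_quat_line:
  assumes w: "w = \<sigma> z + z" "z \<in> range qe" "w \<notin> range sc" and x: "x \<in> range qe"
  shows "\<exists>k. \<sigma> x + x = sc k * w"
proof (rule ccontr)
  assume "\<not> (\<exists>k. \<sigma> x + x = sc k * w)"
  then have independent: "vs.independent {x, z, \<sigma> x + x, w, 1}"
    and card: "card {x, z, \<sigma> x + x, w, 1} = 5"
    using Alt_quat_independent[OF w(1,3)] by blast+
  obtain cx cs cz cs' where "x = qe cx" "\<sigma> x = qe cs" "z = qe cz" "\<sigma> z = qe cs'"
    using x w(2) invol_qe by blast
  then have "\<sigma> x + x = qe (\<lambda>k. cs k + cx k)" "w = qe (\<lambda>k. cs' k + cz k)"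
    unfolding w(1) by (simp_all add: qe_add)
  moreover have "1 = qe (unit_vec 0)" by (simp add: quat_elt_unit_vec quat_basis_def)
  ultimately have "{x, z, \<sigma> x + x, w, 1} \<subseteq> range qe" using x w(2) by auto
  then show False using independent_card_le_4[OF independent] card by simp
qed

lemma Alt_quat_trace_0:
  assumes "qe W = \<sigma> z + z" "z \<in> range qe"
  shows "W 1 = 0"
proof -
  obtain cz cz' where cz: "z = qe cz" and cz': "\<sigma> z = qe cz'"
    using assms(2) invol_qe by blast
  then have "qe W = qe (\<lambda>k. cz' k + cz k)" using assms(1) by (simp add: qe_add)
  then have "W 1 = cz' 1 + cz 1" by (simp add: qe_eq_iff)
  also have "\<dots> = 0" using trace_invol_qe[of cz cz'] cz cz' by simp
  finally show ?thesis .
qed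

lemma Alt_quat_pure:
  assumes w: "qe W = \<sigma> z + z" "z \<in> range qe" and N: "quat_nrd a b W \<noteq> 0"
  shows "qe W \<notin> range sc" and "W 2 \<noteq> 0 \<or> W 3 \<noteq> 0"
proof -
  have W1: "W 1 = 0" using w by (rule Alt_quat_trace_0)
  show not_scalar: "qe W \<notin> range sc"
  proof
    assume "qe W \<in> range sc"
    then obtain k where k: "qe W = sc k" by auto
    then have "sc k \<in> Alt \<sigma>" unfolding Alt_iff using w(1) by (intro exI[of _ z]) simp
    then have "k = 0" by (rule sc_in_Alt_eq_0)
    then show False using qe_square[of W] W1 k N sc_inj[of _ 0] by simp
  qed
  show "W 2 \<noteq> 0 \<or> W 3 \<noteq> 0"
  proof (rule ccontr)
    assume "\<not> (W 2 \<noteq> 0 \<or> W 3 \<noteq> 0)"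
    then have "qe W = qe (vec4 (W 0) 0 0 0)" using W1 by (intro qe_cong) (auto dest!: less_4_cases)
    then show False using not_scalar qe_sc by auto
  qed
qed

text \<open>Since Alt(Q) = F w, the involution is x \<mapsto> x + k w, and k is read off from
  \<sigma>(x w) = w \<sigma>(x), using w x + x w = Trd(x) w + Trd(x w) for the pure element w.\<close>
lemma invol_qe_coeff:
  assumes w: "qe W = \<sigma> z + z" "z \<in> range qe" and N: "quat_nrd a b W \<noteq> 0"
    and k: "\<sigma> (qe c) + qe c = sc k * qe W"
  shows "k * quat_nrd a b W = quat_mult_coords a b c W 1"
proof -
  define N T where "N = quat_nrd a b W" and "T = quat_mult_coords a b c W 1"
  have W1: "W 1 = 0" using w by (rule Alt_quat_trace_0)
  have ww: "qe W * qe W = sc N" using qe_square[of W] W1 by (simp add: N_def)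
  have invol_w: "\<sigma> (qe W) = qe W" using w(1) Alt_fixed Alt_iff by blast
  have "qe c * qe W \<in> range qe" by (simp add: qe_mult)
  then obtain k' where k': "\<sigma> (qe c * qe W) + qe c * qe W = sc k' * qe W"
    using Alt_quat_line[OF w Alt_quat_pure(1)[OF w N]] by blast
  have "\<sigma> (qe c) = sc k * qe W + qe c"
    using k add_self_left[of "qe c" "\<sigma> (qe c)"] by (simp add: add.commute)
  then have "\<sigma> (qe c * qe W) = sc (k * N) + qe W * qe c"
    by (simp only: invol_mult invol_w distrib_left mult_sc_left_commute ww sc_mult)
  then have "qe (\<lambda>j. k * N * unit_vec 0 j + quat_mult_coords a b W c j + quat_mult_coords a b c W j)
      = qe (\<lambda>j. k' * W j)"
    using k' quat_elt_unit_vec[of 0 u v]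
    by (simp add: qe_add[symmetric] qe_smult[symmetric] qe_mult quat_basis_def)
  then have coords_eq: "\<forall>j<4. k * N * unit_vec 0 j + quat_mult_coords a b W c j
      + quat_mult_coords a b c W j = k' * W j"
    by (simp only: qe_eq_iff)
  have coords: "k * N * unit_vec 0 j + (c 1 * W j + T * unit_vec 0 j) = k' * W j" if "j < 4" for j
  proof -
    have "k * N * unit_vec 0 j + (quat_mult_coords a b W c j + quat_mult_coords a b c W j)
        = k' * W j"
      using that coords_eq by (simp add: add.assoc)
    then show ?thesis
      using quat_anticommutator_coords[where a=a and b=b and w=W and c=c, OF char2 W1 that]
      by (simp add: T_def)
  qed
  have "k' = c 1"
    using Alt_quat_pure(2)[OF w N] coords[of 2] coords[of 3] by (auto simp: unit_vec_def)
  then have "k * N + T = 0"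
    using coords[of 0] by (simp add: unit_vec_def algebra_simps)
  then show ?thesis
    unfolding N_def T_def by (metis add_left_imp_eq scalar_add_self)
qed

lemma invol_qe_formula:
  assumes w: "qe W = \<sigma> z + z" "z \<in> range qe" and N: "quat_nrd a b W \<noteq> 0"
  shows "\<sigma> (qe c) = qe (\<lambda>j. c j + (quat_mult_coords a b c W 1 / quat_nrd a b W) * W j)"
proof -
  obtain k where k: "\<sigma> (qe c) + qe c = sc k * qe W"
    using Alt_quat_line[OF w Alt_quat_pure(1)[OF w N]] by blast
  then have "k = quat_mult_coords a b c W 1 / quat_nrd a b W"
    using invol_qe_coeff[OF w N] N by (simp add: field_simps)
  moreover have "\<sigma> (qe c) = qe (\<lambda>j. k * W j) + qe c"
    using k add_self_left[of "qe c" "\<sigma> (qe c)"] by (simp add: add.commute qe_smult)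
  ultimately show ?thesis by (simp add: qe_add add.commute)
qed

lemma disc_rep_pure_coords:
  assumes "disc_rep sc \<sigma> a b u v d" "b \<noteq> 0"
  obtains x y w2 w3 z l
  where "qe (pure_coords b x y w2 w3) = \<sigma> z + z" "z \<in> range qe"
    "quat_nrd a b (pure_coords b x y w2 w3) \<noteq> 0" "d = l^2 * quat_nrd a b (pure_coords b x y w2 w3)"
    "l \<noteq> 0"
proof -
  from assms(1) obtain W l z y where "l \<noteq> 0" and w: "qe W = \<sigma> z + z" "z \<in> range qe"
    and inverse: "qe W * y = 1" and d: "d = l^2 * quat_nrd a b W"
    unfolding disc_rep_def Alt_on_def quat_sub_def diff_eq_add by blast
  have W1: "W 1 = 0" using w by (rule Alt_quat_trace_0)
  have N: "quat_nrd a b W \<noteq> 0"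
  proof
    assume "quat_nrd a b W = 0"
    then have "qe W * qe W = 0" using qe_square[of W] W1 by simp
    moreover have "qe W = qe W * qe W * y" using inverse by (simp add: mult.assoc)
    ultimately have "qe W = 0" by simp
    then show False using inverse one_neq_zero by simp
  qed
  obtain x y where xy: "W 0 = b * (x * W 3 + y * W 2)"
  proof (cases "W 3 = 0")
    case True
    then have "W 2 \<noteq> 0" using Alt_quat_pure(2)[OF w N] by simp
    then show ?thesis using that[of 0 "W 0 / (b * W 2)"] assms(2) True by simp
  next
    case False
    then show ?thesis using that[of "W 0 / (b * W 3)" 0] assms(2) by simp
  qed
  have "qe (pure_coords b x y (W 2) (W 3)) = qe W"
    using xy W1 by (intro qe_cong) (auto dest!: less_4_cases simp: pure_coords_def)
  moreover have "quat_nrd a b (pure_coords b x y (W 2) (W 3)) = quat_nrd a b W"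
    using xy W1 by (simp add: pure_coords_def quat_nrd_def)
  ultimately show ?thesis using that[of x y "W 2" "W 3" z l] w N d \<open>l \<noteq> 0\<close> by simp
qed

lemma trace_witness_invariant:
  assumes w: "qe (pure_coords b x y w2 w3) = \<sigma> z + z" "z \<in> range qe"
    and N: "quat_nrd a b (pure_coords b x y w2 w3) \<noteq> 0" and c': "\<sigma> (qe c) = qe c'"
  shows "quat_mult_coords a b (trace_witness a b x y) c' 1
    = quat_mult_coords a b (trace_witness a b x y) c 1"
proof -
  define W Z where "W = pure_coords b x y w2 w3" and "Z = trace_witness a b x y"
  have "quat_mult_coords a b Z c' 1
      = quat_mult_coords a b Z (\<lambda>j. c j + (quat_mult_coords a b c W 1 / quat_nrd a b W) * W j) 1"
    using c' invol_qe_formula[OF w N] unfolding W_def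
    by (intro fun_cong[OF quat_mult_coords_cong]) (auto simp: qe_eq_iff)
  also have "\<dots> = quat_mult_coords a b Z c 1"
    using trace_witness_pure[OF char2] unfolding Z_def W_def
    by (simp only: quat_trace_add_smult) simp
  finally show ?thesis unfolding Z_def .
qed

lemma trace_witness_norm_value:
  assumes w: "qe (pure_coords b x y w2 w3) = \<sigma> z + z" "z \<in> range qe"
    and N: "quat_nrd a b (pure_coords b x y w2 w3) \<noteq> 0" and c': "\<sigma> (qe c) * qe c = qe c'"
  shows "\<exists>s t. quat_mult_coords a b (trace_witness a b x y) c' 1
    = s^2 + quat_nrd a b (pure_coords b x y w2 w3) * t^2"
proof -
  define W N Z where "W = pure_coords b x y w2 w3" and "N = quat_nrd a b W"
    and "Z = trace_witness a b x y"
  define T c1 where "T = quat_mult_coords a b c W 1" and "c1 j = c j + (T / N) * W j" for j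
  define t1 t2 where "t1 = quat_mult_coords a b (vec4 1 1 x y) c 1"
    and "t2 = quat_mult_coords a b (vec4 1 1 x y) (quat_mult_coords a b W c) 1"
  have "qe c' = qe (quat_mult_coords a b c1 c)"
    using c' unfolding c1_def T_def N_def W_def invol_qe_formula[OF w N] qe_mult ..
  then have "quat_mult_coords a b Z c' 1 = quat_mult_coords a b Z (quat_mult_coords a b c1 c) 1"
    by (intro fun_cong[OF quat_mult_coords_cong]) (auto simp: qe_eq_iff)
  moreover have "(\<lambda>j. N * c1 j) = (\<lambda>j. N * c j + T * W j)"
    unfolding c1_def using N by (intro ext) (simp add: N_def W_def field_simps)
  then have "N * quat_mult_coords a b Z (quat_mult_coords a b c1 c) 1
      = quat_mult_coords a b Z (quat_mult_coords a b (\<lambda>j. N * c j + T * W j) c) 1"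
    by (simp only: quat_mult_coords_smult_left[symmetric] quat_trace_smult[symmetric])
  also have "\<dots> = N * t1^2 + t2^2"
    unfolding t1_def t2_def T_def N_def W_def Z_def by (rule trace_witness_norm[OF char2])
  ultimately have "quat_mult_coords a b Z c' 1 = t1^2 + N * (t2 / N)^2"
    using N by (simp add: N_def W_def field_simps power2_eq_square)
  then show ?thesis unfolding Z_def N_def W_def by blast
qed

lemma disc_functional_exists:
  assumes "disc_rep sc \<sigma> a b u v d" "b \<noteq> 0"
  shows "\<exists>L. disc_functional sc \<sigma> u v d L"
proof -
  obtain x y w2 w3 z l where w: "qe (pure_coords b x y w2 w3) = \<sigma> z + z" "z \<in> range qe"
    and N: "quat_nrd a b (pure_coords b x y w2 w3) \<noteq> 0"
    and d: "d = l^2 * quat_nrd a b (pure_coords b x y w2 w3)" and "l \<noteq> 0"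
    using disc_rep_pure_coords[OF assms] .
  define L where "L k = quat_mult_coords a b (trace_witness a b x y) (unit_vec k) 1" for k
  have L_sum: "(\<Sum>k<4. c k * L k) = quat_mult_coords a b (trace_witness a b x y) c 1" for c
    unfolding L_def by (rule quat_trace_linear)
  have "L 0 = 1"
    by (simp add: L_def trace_witness_def quat_mult_coords_def unit_vec_def)
  moreover have "(\<Sum>k<4. c' k * L k) = (\<Sum>k<4. c k * L k)" if "\<sigma> (qe c) = qe c'" for c c'
    unfolding L_sum using trace_witness_invariant[OF w N that] .
  moreover have "\<exists>s t. (\<Sum>j<4. c' j * L j) = s^2 + d * t^2"
    if k: "k < 4" and c': "\<sigma> (quat_basis u v k) * quat_basis u v k = qe c'" for k c'
  proof -
    obtain s t where "(\<Sum>j<4. c' j * L j) = s^2 + quat_nrd a b (pure_coords b x y w2 w3) * t^2"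
      using trace_witness_norm_value[OF w N] c' quat_elt_unit_vec[OF k] L_sum by metis
    then have "(\<Sum>j<4. c' j * L j) = s^2 + d * (t / l)^2"
      using \<open>l \<noteq> 0\<close> by (simp add: d field_simps power2_eq_square)
    then show ?thesis by blast
  qed
  ultimately show ?thesis unfolding disc_functional_def by blast
qed

end

lemma pf_values_eq_range: "pf_values alph n = range (\<lambda>x. pf_bilin alph n x x)"
proof (intro equalityI subsetI)
  fix y assume "y \<in> range (\<lambda>x. pf_bilin alph n x x)"
  then obtain x where y: "y = pf_bilin alph n x x" by blast
  show "y \<in> pf_values alph n"
  proof (cases "\<exists>S\<in>Pow {..<n}. x S \<noteq> 0")
    case True
    then show ?thesis unfolding pf_values_def y by blast
  next
    case False
    then have "y = 0" unfolding y pf_bilin_def by (intro sum.neutral) auto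
    then show ?thesis by (simp add: pf_values_def)
  qed
next
  fix y assume "y \<in> pf_values alph n"
  moreover have "pf_bilin alph n (\<lambda>_. 0) (\<lambda>_. 0) = 0" by (simp add: pf_bilin_def)
  ultimately show "y \<in> range (\<lambda>x. pf_bilin alph n x x)"
    unfolding pf_values_def by (auto intro: range_eqI)
qed

lemma pf_values_zero: "0 \<in> pf_values alph n"
  by (simp add: pf_values_def)

lemma pf_values_add:
  fixes alph :: "nat \<Rightarrow> 'a::field"
  assumes "(1::'a) + 1 = 0" "p \<in> pf_values alph n" "q \<in> pf_values alph n"
  shows "p + q \<in> pf_values alph n"
proof -
  have "pf_bilin alph n x x + pf_bilin alph n y y
      = pf_bilin alph n (\<lambda>S. x S + y S) (\<lambda>S. x S + y S)" for x y
    unfolding pf_bilin_def sum.distrib[symmetric]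
    by (intro sum.cong refl) (simp add: algebra_simps numeral_char2[OF assms(1)])
  then show ?thesis using assms(2,3) unfolding pf_values_eq_range by (auto simp del: pf_bilin_def)
qed

lemma pf_values_square_mult: "p \<in> pf_values alph n \<Longrightarrow> t^2 * p \<in> pf_values alph n"
proof -
  have "t^2 * pf_bilin alph n x x = pf_bilin alph n (\<lambda>S. t * x S) (\<lambda>S. t * x S)" for x
    unfolding pf_bilin_def sum_distrib_left
    by (intro sum.cong refl) (simp add: algebra_simps power2_eq_square)
  then show "p \<in> pf_values alph n \<Longrightarrow> t^2 * p \<in> pf_values alph n"
    unfolding pf_values_eq_range by auto
qed

lemma prod_binary_in_pf_values:
  "(\<Prod>i<n. s i^2 + alph i * t i^2) \<in> pf_values alph n"
proof -
  have "(\<Prod>i<n. s i^2 + alph i * t i^2) = (\<Prod>i<n. alph i * t i^2 + s i^2)"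
    by (simp add: add.commute)
  also have "\<dots> = (\<Sum>S\<in>Pow {..<n}. (\<Prod>i\<in>S. alph i * t i^2) * (\<Prod>i\<in>{..<n} - S. s i^2))"
    by (rule prod_add) simp
  also have "\<dots> = pf_bilin alph n (\<lambda>S. (\<Prod>i\<in>S. t i) * (\<Prod>i\<in>{..<n} - S. s i))
      (\<lambda>S. (\<Prod>i\<in>S. t i) * (\<Prod>i\<in>{..<n} - S. s i))"
    unfolding pf_bilin_def
    by (intro sum.cong refl)
      (simp add: prod.distrib prod_power_distrib power2_eq_square algebra_simps)
  finally show ?thesis unfolding pf_values_eq_range by blast
qed

lemma tensor_index_0: "tensor_index 0 = {\<lambda>_. 0}"
  by (auto simp: tensor_index_def)

lemma tensor_index_Suc:
  "tensor_index (Suc m) = (\<lambda>(f, k). f(m := k)) ` (tensor_index m \<times> {..<4})"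
proof (intro equalityI subsetI)
  fix g assume "g \<in> tensor_index (Suc m)"
  then have "g(m := 0) \<in> tensor_index m" "g m < 4" "g = (g(m := 0))(m := g m)"
    by (auto simp: tensor_index_def)
  then show "g \<in> (\<lambda>(f, k). f(m := k)) ` (tensor_index m \<times> {..<4})"
    by (intro image_eqI[where x="(g(m := 0), g m)"]) auto
qed (auto simp: tensor_index_def less_Suc_eq)

lemma inj_on_tensor_index_upd: "inj_on (\<lambda>(f, k). f(m := k)) (tensor_index m \<times> {..<4})"
proof (rule inj_onI, clarify)
  fix f k f' k'
  assume f: "f \<in> tensor_index m" "f' \<in> tensor_index m" and eq: "f(m := k) = f'(m := k')"
  then have "k = k'" by (metis fun_upd_same)
  moreover have "f i = f' i" for i
    using f fun_cong[OF eq, of i] by (cases "i = m") (auto simp: tensor_index_def)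
  ultimately show "f = f' \<and> k = k'" by auto
qed

lemma finite_tensor_index: "finite (tensor_index m)"
  by (induction m) (simp_all add: tensor_index_0 tensor_index_Suc)

lemma sum_tensor_index_Suc:
  "(\<Sum>g\<in>tensor_index (Suc m). F g) = (\<Sum>f\<in>tensor_index m. \<Sum>k<4. F (f(m := k)))"
  unfolding tensor_index_Suc
  by (simp add: sum.reindex[OF inj_on_tensor_index_upd] sum.cartesian_product prod.case_distrib)

lemma sum_tensor_index_prod:
  "(\<Sum>f\<in>tensor_index m. \<Prod>i<m. g i (f i)) = (\<Prod>i<m. \<Sum>k<4. (g i k :: 'a::comm_semiring_1))"
proof (induction m)
  case (Suc m)
  have "(\<Sum>f\<in>tensor_index (Suc m). \<Prod>i<Suc m. g i (f i))
      = (\<Sum>f\<in>tensor_index m. \<Sum>k<4. (\<Prod>i<m. g i (f i)) * g m k)"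
    unfolding sum_tensor_index_Suc by (intro sum.cong refl) (simp add: prod.lessThan_Suc)
  also have "\<dots> = (\<Sum>f\<in>tensor_index m. \<Prod>i<m. g i (f i)) * (\<Sum>k<4. g m k)"
    by (subst sum_distrib_right, subst sum_distrib_left, rule refl)
  finally show ?case using Suc by (simp add: prod.lessThan_Suc)
qed (simp add: tensor_index_0)

lemma tensor_basis_Suc:
  "tensor_basis (Suc m) u v (f(m := k)) = tensor_basis m u v f * quat_basis (u m) (v m) k"
proof -
  have "(\<Prod>i\<leftarrow>[0..<m]. quat_basis (u i) (v i) (if i = m then k else f i))
      = (\<Prod>i\<leftarrow>[0..<m]. quat_basis (u i) (v i) (f i))"
    by (intro arg_cong[where f=prod_list] map_cong) auto
  then show ?thesis by (simp add: tensor_basis_def)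
qed

lemma prod_list_commute:
  fixes g :: "nat \<Rightarrow> 'b::monoid_mult"
  assumes "\<And>j. j < m \<Longrightarrow> g j * x = x * g j"
  shows "prod_list (map g [0..<m]) * x = x * prod_list (map g [0..<m])"
  using assms
proof (induction m)
  case (Suc m)
  then have IH: "prod_list (map g [0..<m]) * x = x * prod_list (map g [0..<m])" by simp
  have "prod_list (map g [0..<Suc m]) * x = prod_list (map g [0..<m]) * (g m * x)"
    by (simp add: mult.assoc)
  also have "\<dots> = prod_list (map g [0..<m]) * x * g m"
    using Suc.prems[of m] by (simp add: mult.assoc)
  also have "\<dots> = x * prod_list (map g [0..<Suc m])" by (simp add: IH mult.assoc)
  finally show ?case .
qed simp

lemma prod_list_map_mult:
  fixes f g :: "nat \<Rightarrow> 'b::monoid_mult"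
  assumes "\<And>i j. i < m \<Longrightarrow> j < i \<Longrightarrow> g j * f i = f i * g j"
  shows "prod_list (map (\<lambda>i. f i * g i) [0..<m])
    = prod_list (map f [0..<m]) * prod_list (map g [0..<m])"
  using assms
proof (induction m)
  case (Suc m)
  have commute: "prod_list (map g [0..<m]) * f m = f m * prod_list (map g [0..<m])"
    by (rule prod_list_commute) (use Suc.prems in auto)
  have "prod_list (map (\<lambda>i. f i * g i) [0..<Suc m])
      = prod_list (map f [0..<m]) * (prod_list (map g [0..<m]) * f m) * g m"
    using Suc by (simp add: mult.assoc)
  also have "\<dots> = prod_list (map f [0..<Suc m]) * prod_list (map g [0..<Suc m])"
    by (simp only: commute) (simp add: mult.assoc)
  finally show ?case .
qed simp

lemma prod_list_map_eq_1:
  "(\<And>j. j < m \<Longrightarrow> g j = 1) \<Longrightarrow> prod_list (map g [0..<m]) = (1 :: 'b::monoid_mult)"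
  by (induction m) auto

lemma prod_list_map_single:
  fixes g :: "nat \<Rightarrow> 'b::monoid_mult"
  assumes "i < m" "\<And>j. j < m \<Longrightarrow> j \<noteq> i \<Longrightarrow> g j = 1"
  shows "prod_list (map g [0..<m]) = g i"
  using assms
proof (induction m)
  case (Suc m)
  show ?case
  proof (cases "i = m")
    case True
    then have "prod_list (map g [0..<m]) = 1"
      using Suc.prems(2) by (intro prod_list_map_eq_1) auto
    then show ?thesis using True by simp
  next
    case False
    then show ?thesis using Suc by auto
  qed
qed simp

context char2_involution
begin

lemma prod_list_quat_elt:
  "prod_list (map (\<lambda>i. quat_elt sc (u i) (v i) (C i)) [0..<m])
     = (\<Sum>f\<in>tensor_index m. sc (\<Prod>i<m. C i (f i)) * tensor_basis m u v f)"
proof (induction m)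
  case 0
  then show ?case by (simp add: tensor_index_0 tensor_basis_def)
next
  case (Suc m)
  let ?P = "\<lambda>f. \<Prod>i<m. C i (f i)"
  have "prod_list (map (\<lambda>i. quat_elt sc (u i) (v i) (C i)) [0..<Suc m])
      = (\<Sum>f\<in>tensor_index m. sc (?P f) * tensor_basis m u v f)
        * (\<Sum>k<4. sc (C m k) * quat_basis (u m) (v m) k)"
    using Suc by (simp add: quat_elt_sum[of "u m"])
  also have "\<dots> = (\<Sum>f\<in>tensor_index m. \<Sum>k<4.
      sc (?P f) * tensor_basis m u v f * (sc (C m k) * quat_basis (u m) (v m) k))"
    by (subst sum_distrib_right, subst sum_distrib_left, rule refl)
  also have "\<dots> = (\<Sum>f\<in>tensor_index m. \<Sum>k<4.
      sc (\<Prod>i<Suc m. C i ((f(m := k)) i)) * tensor_basis (Suc m) u v (f(m := k)))"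
  proof (intro sum.cong refl)
    fix f k
    have "(\<Prod>i<Suc m. C i ((f(m := k)) i)) = ?P f * C m k"
      by (simp add: prod.lessThan_Suc)
    then show "sc (?P f) * tensor_basis m u v f * (sc (C m k) * quat_basis (u m) (v m) k)
        = sc (\<Prod>i<Suc m. C i ((f(m := k)) i)) * tensor_basis (Suc m) u v (f(m := k))"
      by (simp only: sc_mult_sc_mult tensor_basis_Suc)
  qed
  also have "\<dots> = (\<Sum>f\<in>tensor_index (Suc m). sc (\<Prod>i<Suc m. C i (f i)) * tensor_basis (Suc m) u v f)"
    by (rule sum_tensor_index_Suc[symmetric])
  finally show ?case .
qed

lemma commute_quat_elt:
  assumes "x * u = u * x" "x * v = v * x"
  shows "x * quat_elt sc u v c = quat_elt sc u v c * x"
proof -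
  have smult: "x * (sc t * y) = sc t * y * x" if "x * y = y * x" for t y
    by (simp only: mult_sc_left_commute that mult.assoc)
  have "x * (u * v) = (u * v) * x"
    by (metis assms mult.assoc)
  then show ?thesis
    unfolding quat_elt_def distrib_left distrib_right
    by (simp only: smult assms sc_commute[of _ x])
qed

lemma invol_prod_list:
  assumes "\<And>i j. i < m \<Longrightarrow> j < i \<Longrightarrow> \<sigma> (g i) * \<sigma> (g j) = \<sigma> (g j) * \<sigma> (g i)"
  shows "\<sigma> (prod_list (map g [0..<m])) = prod_list (map (\<lambda>i. \<sigma> (g i)) [0..<m])"
  using assms
proof (induction m)
  case (Suc m)
  have "\<sigma> (prod_list (map g [0..<m])) = prod_list (map (\<lambda>i. \<sigma> (g i)) [0..<m])"
    by (rule Suc.IH) (use Suc.prems less_SucI in blast)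
  then have "\<sigma> (prod_list (map g [0..<Suc m])) = \<sigma> (g m) * prod_list (map (\<lambda>i. \<sigma> (g i)) [0..<m])"
    by simp
  also have "\<dots> = prod_list (map (\<lambda>i. \<sigma> (g i)) [0..<m]) * \<sigma> (g m)"
    by (rule prod_list_commute[symmetric]) (use Suc.prems in auto)
  finally show ?case by simp
qed simp

end

locale decomposition = char2_involution sc \<sigma> for sc :: "'a::field \<Rightarrow> 'b::ring_1" and \<sigma> +
  fixes n :: nat and a b :: "nat \<Rightarrow> 'a" and u v :: "nat \<Rightarrow> 'b" and alph :: "nat \<Rightarrow> 'a"
  assumes decomp: "tensor_decomp sc \<sigma> n a b u v"
    and disc: "\<forall>i<n. disc_rep sc \<sigma> (a i) (b i) (u i) (v i) (alph i)"
begin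

abbreviation qi where "qi i \<equiv> quat_elt sc (u i) (v i)"
abbreviation e where "e \<equiv> tensor_basis n u v"

lemma tensor_basis_spans: "\<exists>c. x = (\<Sum>f\<in>tensor_index n. sc (c f) * e f)"
  and tensor_basis_independent:
    "(\<Sum>f\<in>tensor_index n. sc (c f) * e f) = 0 \<Longrightarrow> f \<in> tensor_index n \<Longrightarrow> c f = 0"
  using decomp unfolding tensor_decomp_def by blast+

lemma tensor_index_less_4: "f \<in> tensor_index n \<Longrightarrow> i < n \<Longrightarrow> f i < 4"
  by (simp add: tensor_index_def)

lemma factor_coords_unique:
  assumes i: "i < n" and c: "qi i c = 0"
  shows "c 0 = 0 \<and> c 1 = 0 \<and> c 2 = 0 \<and> c 3 = 0"
proof -
  define fk where "fk k j = (if j = i then k else 0)" for k j :: nat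
  have fk_index: "fk k \<in> tensor_index n" if "k < 4" for k
    using i that by (auto simp: fk_def tensor_index_def)
  have "inj_on fk {..<4}"
  proof (rule inj_onI)
    fix k k' assume "fk k = fk k'"
    then have "fk k i = fk k' i" by simp
    then show "k = k'" by (simp add: fk_def)
  qed
  moreover have "e (fk k) = quat_basis (u i) (v i) k" if "k < 4" for k
    unfolding tensor_basis_def
    by (rule trans[OF prod_list_map_single[OF i]]) (auto simp: fk_def quat_basis_def)
  ultimately have "(\<Sum>f\<in>fk ` {..<4}. sc (c (f i)) * e f) = qi i c"
    by (simp add: sum.reindex quat_elt_sum fk_def)
  moreover define C where "C f = (if f \<in> fk ` {..<4} then c (f i) else 0)" for f
  ultimately have "(\<Sum>f\<in>tensor_index n. sc (C f) * e f) = 0"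
    using c fk_index
    by (subst sum.mono_neutral_cong_right[of _ "fk ` {..<4}" _ "\<lambda>f. sc (c (f i)) * e f"])
      (auto simp: C_def finite_tensor_index)
  then have "c k = 0" if "k < 4" for k
    using tensor_basis_independent[of C "fk k"] fk_index[OF that] that by (simp add: C_def fk_def)
  then show ?thesis by simp
qed

lemma factor_relations:
  assumes "i < n"
  shows "u i * u i + u i = sc (a i)" "v i * v i = sc (b i)" "b i \<noteq> 0" "v i * u i = (u i + 1) * v i"
    "\<sigma> (u i) \<in> quat_sub sc (u i) (v i)" "\<sigma> (v i) \<in> quat_sub sc (u i) (v i)"
  using decomp assms unfolding tensor_decomp_def by blast+

lemma factor_quaternion: "i < n \<Longrightarrow> quaternion sc \<sigma> (u i) (v i) (a i) (b i)"
  by (intro quaternion.intro char2_involution_axioms quaternion_axioms.intro factor_relations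
      factor_coords_unique)

lemma factors_commute:
  assumes "i < n" "j < n" "i \<noteq> j"
  shows "qi i c * qi j d = qi j d * qi i c"
proof -
  have comm: "u i * u j = u j * u i \<and> u i * v j = v j * u i \<and> v i * v j = v j * v i"
    if "i < n" "j < n" "i \<noteq> j" for i j
    using decomp that unfolding tensor_decomp_def by blast
  have "u j * qi i c = qi i c * u j"
    using comm[OF assms] comm[OF assms(2,1)] by (intro commute_quat_elt) auto
  moreover have "v j * qi i c = qi i c * v j"
    using comm[OF assms] comm[OF assms(2,1)] by (intro commute_quat_elt) auto
  ultimately show ?thesis by (intro commute_quat_elt) auto
qed

definition factor_fun :: "nat \<Rightarrow> nat \<Rightarrow> 'a" where
  "factor_fun = (SOME L. \<forall>i<n. disc_functional sc \<sigma> (u i) (v i) (alph i) (L i))"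

lemma disc_functional_factor_fun:
  assumes "i < n"
  shows "disc_functional sc \<sigma> (u i) (v i) (alph i) (factor_fun i)"
proof -
  have "\<forall>i\<in>{..<n}. \<exists>L. disc_functional sc \<sigma> (u i) (v i) (alph i) L"
    using quaternion.disc_functional_exists[OF factor_quaternion] disc factor_relations(3) by blast
  from bchoice[OF this] have "\<exists>L. \<forall>i<n. disc_functional sc \<sigma> (u i) (v i) (alph i) (L i)"
    by auto
  then have "\<forall>i<n. disc_functional sc \<sigma> (u i) (v i) (alph i) (factor_fun i)"
    unfolding factor_fun_def by (rule someI_ex)
  then show ?thesis using assms by blast
qed

definition tensor_coords :: "'b \<Rightarrow> (nat \<Rightarrow> nat) \<Rightarrow> 'a" where
  "tensor_coords x = (SOME c. x = (\<Sum>f\<in>tensor_index n. sc (c f) * e f))"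

definition Phi :: "'b \<Rightarrow> 'a" where
  "Phi x = (\<Sum>f\<in>tensor_index n. tensor_coords x f * (\<Prod>i<n. factor_fun i (f i)))"

lemma Phi_eq:
  assumes "x = (\<Sum>f\<in>tensor_index n. sc (d f) * e f)"
  shows "Phi x = (\<Sum>f\<in>tensor_index n. d f * (\<Prod>i<n. factor_fun i (f i)))"
proof -
  have "x = (\<Sum>f\<in>tensor_index n. sc (tensor_coords x f) * e f)"
    unfolding tensor_coords_def by (rule someI_ex[OF tensor_basis_spans])
  then have "(\<Sum>f\<in>tensor_index n. sc (tensor_coords x f - d f) * e f) = 0"
    using assms by (simp add: sum_subtractf left_diff_distrib)
  then show ?thesis
    unfolding Phi_def using tensor_basis_independent[of "\<lambda>f. tensor_coords x f - d f"]
    by (intro sum.cong refl) simp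
qed

lemma Phi_add: "Phi (x + y) = Phi x + Phi y"
proof -
  obtain cx cy where cx: "x = (\<Sum>f\<in>tensor_index n. sc (cx f) * e f)"
    and cy: "y = (\<Sum>f\<in>tensor_index n. sc (cy f) * e f)"
    using tensor_basis_spans by metis
  then have "x + y = (\<Sum>f\<in>tensor_index n. sc (cx f + cy f) * e f)"
    by (simp add: sum.distrib distrib_right)
  then have "Phi (x + y) = (\<Sum>f\<in>tensor_index n. (cx f + cy f) * (\<Prod>i<n. factor_fun i (f i)))"
    by (rule Phi_eq)
  then show ?thesis
    unfolding Phi_eq[OF cx] Phi_eq[OF cy] by (simp add: sum.distrib distrib_right)
qed

lemma Phi_smult: "Phi (sc t * x) = t * Phi x"
proof -
  obtain cx where cx: "x = (\<Sum>f\<in>tensor_index n. sc (cx f) * e f)"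
    using tensor_basis_spans by metis
  then have "sc t * x = (\<Sum>f\<in>tensor_index n. sc (t * cx f) * e f)"
    by (simp add: sum_distrib_left sc_mult_assoc)
  then have "Phi (sc t * x) = (\<Sum>f\<in>tensor_index n. t * cx f * (\<Prod>i<n. factor_fun i (f i)))"
    by (rule Phi_eq)
  then show ?thesis
    unfolding Phi_eq[OF cx] by (simp add: sum_distrib_left mult.assoc)
qed

lemma Phi_zero: "Phi 0 = 0"
  using Phi_smult[of 0 0] by simp

lemma Phi_sum: "Phi (sum g S) = (\<Sum>s\<in>S. Phi (g s))"
  by (induction S rule: infinite_finite_induct) (simp_all add: Phi_zero Phi_add)

lemma Phi_prod_list:
  "Phi (prod_list (map (\<lambda>i. qi i (C i)) [0..<n])) = (\<Prod>i<n. \<Sum>k<4. C i k * factor_fun i k)"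
proof -
  have "Phi (prod_list (map (\<lambda>i. qi i (C i)) [0..<n]))
      = (\<Sum>f\<in>tensor_index n. \<Prod>i<n. C i (f i) * factor_fun i (f i))"
    by (simp add: Phi_eq[OF prod_list_quat_elt] prod.distrib)
  also have "\<dots> = (\<Prod>i<n. \<Sum>k<4. C i k * factor_fun i k)"
    by (rule sum_tensor_index_prod)
  finally show ?thesis .
qed

lemma tensor_basis_eq_prod_list:
  "f \<in> tensor_index n \<Longrightarrow> e f = prod_list (map (\<lambda>i. qi i (unit_vec (f i))) [0..<n])"
  unfolding tensor_basis_def
  by (intro arg_cong[where f=prod_list] map_cong refl)
    (simp add: quat_elt_unit_vec tensor_index_def)

lemma Phi_tensor_basis: "f \<in> tensor_index n \<Longrightarrow> Phi (e f) = (\<Prod>i<n. factor_fun i (f i))"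
  by (simp add: tensor_basis_eq_prod_list Phi_prod_list sum_unit_vec tensor_index_def)

lemma invol_tensor_basis:
  assumes f: "f \<in> tensor_index n"
  obtains S where "\<And>i. i < n \<Longrightarrow> \<sigma> (qi i (unit_vec (f i))) = qi i (S i)"
    and "\<sigma> (e f) = prod_list (map (\<lambda>i. qi i (S i)) [0..<n])"
proof -
  define S where "S i = (SOME c'. \<sigma> (qi i (unit_vec (f i))) = qi i c')" for i
  have S: "\<sigma> (qi i (unit_vec (f i))) = qi i (S i)" if "i < n" for i
    unfolding S_def by (rule someI_ex[OF quaternion.invol_qe[OF factor_quaternion[OF that]]])
  have "\<sigma> (e f) = prod_list (map (\<lambda>i. \<sigma> (qi i (unit_vec (f i)))) [0..<n])"
    unfolding tensor_basis_eq_prod_list[OF f]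
    by (rule invol_prod_list) (simp add: S factors_commute)
  also have "\<dots> = prod_list (map (\<lambda>i. qi i (S i)) [0..<n])"
    by (intro arg_cong[where f=prod_list] map_cong refl) (simp add: S)
  finally show ?thesis using that S by blast
qed

lemma Phi_invol_tensor_basis:
  assumes f: "f \<in> tensor_index n"
  shows "Phi (\<sigma> (e f)) = Phi (e f)"
proof -
  obtain S where S: "\<And>i. i < n \<Longrightarrow> \<sigma> (qi i (unit_vec (f i))) = qi i (S i)"
    and invol_e: "\<sigma> (e f) = prod_list (map (\<lambda>i. qi i (S i)) [0..<n])"
    using invol_tensor_basis[OF f] by blast
  have "Phi (\<sigma> (e f)) = (\<Prod>i<n. \<Sum>k<4. S i k * factor_fun i k)"
    unfolding invol_e by (rule Phi_prod_list)
  also have "\<dots> = (\<Prod>i<n. \<Sum>k<4. unit_vec (f i) k * factor_fun i k)"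
    using S disc_functional_factor_fun by (intro prod.cong refl) (simp add: disc_functional_def)
  also have "\<dots> = Phi (e f)"
    using f by (simp add: Phi_tensor_basis sum_unit_vec tensor_index_less_4)
  finally show ?thesis .
qed

lemma Phi_Alt: "Phi (\<sigma> y + y) = 0"
proof -
  obtain d where d: "y = (\<Sum>f\<in>tensor_index n. sc (d f) * e f)" using tensor_basis_spans by blast
  have "\<sigma> y + y = (\<Sum>f\<in>tensor_index n. sc (d f) * \<sigma> (e f) + sc (d f) * e f)"
    unfolding d by (simp only: invol_sum invol_smult sum.distrib)
  then show ?thesis by (simp add: Phi_sum Phi_add Phi_smult Phi_invol_tensor_basis)
qed

lemma Phi_norm_tensor_basis:
  assumes f: "f \<in> tensor_index n"
  shows "Phi (\<sigma> (e f) * e f) \<in> pf_values alph n"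
proof -
  obtain S where S: "\<And>i. i < n \<Longrightarrow> \<sigma> (qi i (unit_vec (f i))) = qi i (S i)"
    and invol_e: "\<sigma> (e f) = prod_list (map (\<lambda>i. qi i (S i)) [0..<n])"
    using invol_tensor_basis[OF f] by blast
  define D where "D i = quat_mult_coords (a i) (b i) (S i) (unit_vec (f i))" for i
  have "\<sigma> (e f) * e f = prod_list (map (\<lambda>i. qi i (S i) * qi i (unit_vec (f i))) [0..<n])"
    unfolding invol_e unfolding tensor_basis_eq_prod_list[OF f]
    by (rule prod_list_map_mult[symmetric]) (simp add: factors_commute)
  also have "\<dots> = prod_list (map (\<lambda>i. qi i (D i)) [0..<n])"
    using quaternion.qe_mult[OF factor_quaternion]
    by (intro arg_cong[where f=prod_list] map_cong refl) (simp add: D_def)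
  finally have Phi_eq: "Phi (\<sigma> (e f) * e f) = (\<Prod>i<n. \<Sum>k<4. D i k * factor_fun i k)"
    by (simp add: Phi_prod_list)
  have "\<forall>i. \<exists>p. i < n \<longrightarrow> (\<Sum>k<4. D i k * factor_fun i k) = fst p^2 + alph i * snd p^2"
  proof (rule allI, cases)
    fix i assume i: "i < n"
    have "\<sigma> (quat_basis (u i) (v i) (f i)) * quat_basis (u i) (v i) (f i) = qi i (D i)"
      using S[OF i] quaternion.qe_mult[OF factor_quaternion[OF i]]
      by (simp add: quat_elt_unit_vec[symmetric] tensor_index_less_4[OF f i] D_def)
    then obtain s t where "(\<Sum>k<4. D i k * factor_fun i k) = s^2 + alph i * t^2"
      using disc_functional_factor_fun[OF i] tensor_index_less_4[OF f i]
      unfolding disc_functional_def by blast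
    then show "\<exists>p. i < n \<longrightarrow> (\<Sum>k<4. D i k * factor_fun i k) = fst p^2 + alph i * snd p^2"
      by (intro exI[of _ "(s, t)"]) simp
  qed simp
  from choice[OF this] obtain p
    where p: "\<forall>i. i < n \<longrightarrow> (\<Sum>k<4. D i k * factor_fun i k) = fst (p i)^2 + alph i * snd (p i)^2"
    by blast
  have "Phi (\<sigma> (e f) * e f) = (\<Prod>i<n. fst (p i)^2 + alph i * snd (p i)^2)"
    unfolding Phi_eq using p by (intro prod.cong refl) simp
  then show ?thesis using prod_binary_in_pf_values by simp
qed

text \<open>Cross terms \<sigma>(x) y + \<sigma>(y) x lie in Alt, so only the diagonal terms of \<sigma>(y) y count.\<close>
lemma Phi_norm: "Phi (\<sigma> y * y) \<in> pf_values alph n"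
proof -
  have "Phi (\<sigma> (\<Sum>f\<in>S. sc (d f) * e f) * (\<Sum>f\<in>S. sc (d f) * e f)) \<in> pf_values alph n"
    if "finite S" "S \<subseteq> tensor_index n" for S d
    using that
  proof (induction S rule: finite_induct)
    case empty
    then show ?case by (simp add: Phi_zero pf_values_zero)
  next
    case (insert g S)
    let ?t = "sc (d g) * e g" and ?R = "\<Sum>f\<in>S. sc (d f) * e f"
    have "\<sigma> ?t * ?t = sc (d g * d g) * (\<sigma> (e g) * e g)"
      by (simp only: invol_smult sc_mult_sc_mult)
    moreover have "\<sigma> (?t + ?R) * (?t + ?R) = \<sigma> ?t * ?t + \<sigma> ?R * ?R + (\<sigma> (\<sigma> ?R * ?t) + \<sigma> ?R * ?t)"
      by (simp add: distrib_left distrib_right add_ac)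
    ultimately have "\<sigma> (?t + ?R) * (?t + ?R) = sc (d g * d g) * (\<sigma> (e g) * e g) + \<sigma> ?R * ?R
        + (\<sigma> (\<sigma> ?R * ?t) + \<sigma> ?R * ?t)"
      by simp
    then have "Phi (\<sigma> (?t + ?R) * (?t + ?R)) = (d g)^2 * Phi (\<sigma> (e g) * e g) + Phi (\<sigma> ?R * ?R)"
      by (simp only: Phi_add[of "sc (d g * d g) * (\<sigma> (e g) * e g) + \<sigma> ?R * ?R"] Phi_Alt add_0_right)
        (simp only: Phi_add Phi_smult power2_eq_square)
    moreover have "(d g)^2 * Phi (\<sigma> (e g) * e g) \<in> pf_values alph n"
      using insert.prems by (intro pf_values_square_mult Phi_norm_tensor_basis) simp
    ultimately show ?case
      using insert pf_values_add[OF char2] by simp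
  qed
  then show ?thesis using tensor_basis_spans[of y] finite_tensor_index by blast
qed

lemma Phi_one: "Phi 1 = 1"
proof -
  have zero: "(\<lambda>_. 0) \<in> tensor_index n" by (simp add: tensor_index_def)
  have "e (\<lambda>_. 0) = 1"
    unfolding tensor_basis_def by (rule prod_list_map_eq_1) (simp add: quat_basis_def)
  then show ?thesis
    using Phi_tensor_basis[OF zero] disc_functional_factor_fun by (simp add: disc_functional_def)
qed

lemma sum_Phi_norm: "(\<Sum>i<k::nat. Phi (\<sigma> (y i) * y i)) \<in> pf_values alph n"
  by (induction k) (simp_all add: pf_values_zero pf_values_add[OF char2] Phi_norm)

lemma pf_values_of_Alt:
  fixes x :: "nat \<Rightarrow> 'b" and m :: nat
  assumes "sc \<alpha> + (\<Sum>i<m. \<sigma> (x i) * x i) \<in> Alt \<sigma>"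
  shows "\<alpha> \<in> pf_values alph n"
proof -
  obtain z where "sc \<alpha> + (\<Sum>i<m. \<sigma> (x i) * x i) = \<sigma> z + z" using assms Alt_iff by blast
  then have "Phi (sc \<alpha> + (\<Sum>i<m. \<sigma> (x i) * x i)) = 0" using Phi_Alt by simp
  then have "\<alpha> + (\<Sum>i<m. Phi (\<sigma> (x i) * x i)) = 0"
    using Phi_smult[of \<alpha> 1] by (simp add: Phi_add Phi_sum Phi_one)
  then have "\<alpha> = (\<Sum>i<m. Phi (\<sigma> (x i) * x i))"
    by (metis add.commute add_left_imp_eq scalar_add_self)
  then show ?thesis using sum_Phi_norm by simp
qed

end

theorem lemma4p8:
  fixes sc :: "'a::field \<Rightarrow> 'b::ring_1" and \<sigma> :: "'b \<Rightarrow> 'b"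
    and n :: nat and a b :: "nat \<Rightarrow> 'a" and u v :: "nat \<Rightarrow> 'b" and alph :: "nat \<Rightarrow> 'a"
    and \<alpha> :: 'a and m :: nat and x :: "nat \<Rightarrow> 'b"
  assumes "(1::'a) + 1 = 0"
    and "central_simple sc"
    and "involution_first_kind sc \<sigma>"
    and "orthogonal_char2 \<sigma>"
    and "n \<ge> 1"
    and "tensor_decomp sc \<sigma> n a b u v"
    and "\<forall>i<n. disc_rep sc \<sigma> (a i) (b i) (u i) (v i) (alph i)"
    and "sc \<alpha> + (\<Sum>i<m. \<sigma> (x i) * x i) \<in> Alt \<sigma>"
  shows "\<alpha> \<in> pf_values alph n"
proof -
  have "alg_scalars sc" "1 \<notin> Alt \<sigma>"
    using assms(2,4) by (simp_all add: central_simple_def orthogonal_char2_def)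
  then interpret decomposition sc \<sigma> n a b u v alph
    using assms(1,3,6,7) by unfold_locales
  show ?thesis using assms(8) by (rule pf_values_of_Alt)
qed

end
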